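(* Let $G_1=(V,D_1)$ and $G_2=(V,D_2)$ be distinct simple directed graphs on the same node set $V$. Suppose they have the same out-degree sequence, meaning $|\mathrm{ch}_1(v)|=|\mathrm{ch}_2(v)|$ for every $v\in V$, and that at least one of them is acyclic. Then $G_1$ and $G_2$ have different Jacobian matroids.
   Context: A directed graph $G=(V,D)$ has edge set $D\subseteq V\times V$ of ordered pairs $(i,j)$, $i\neq j$. It is simple if $(i,j)$ and $(j,i)$ are never both in $D$. $\mathrm{ch}_k(v)$ is the set of children of $v$ in $G_k$. For $G=(V,D)$ let $\Lambda$ be the $V\times V$ matrix with indeterminate entries $\lambda_{ij}$ for $(i,j)\in D$ and zeros elsewhere, and $s$ a further indeterminate. Let $\psi_G(\Lambda,s)=s(I-\Lambda)(I-\Lambda)^T=K$. The transposed Jacobian $J(\psi_G)$ has rows indexed by $\{\lambda_{kl}:(k,l)\in D\}\cup\{s\}$ and columns indexed by $K_{ij}$, $i\le j$, with entries $\partial K_{ij}/\partial\theta$. The Jacobian matroid of $G$ is the matroid on the columns in which a set is independent iff its columns are linearly independent over $\mathbb{R}(\lambda,s)$. *)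

theory Defs
  imports Complex_Main "HOL-Library.Poly_Mapping" "HOL-Library.Option_ord"
    "HOL-Library.Product_Lexorder" "HOL-Computational_Algebra.Fraction_Field"
begin

text \<open>Indeterminates: Some (k,l) stands for lambda_kl, None stands for s.\<close>
type_synonym 'v indet = "('v \<times> 'v) option"

type_synonym 'v mpoly = "('v indet \<Rightarrow>\<^sub>0 nat) \<Rightarrow>\<^sub>0 real"

definition mvar :: "'v indet \<Rightarrow> 'v mpoly" where
  "mvar x = Poly_Mapping.single (Poly_Mapping.single x 1) 1"

definition mpderiv :: "'v indet \<Rightarrow> 'v mpoly \<Rightarrow> 'v mpoly" where
  "mpderiv x p = (\<Sum>m\<in>Poly_Mapping.keys p.
      Poly_Mapping.single (m - Poly_Mapping.single x 1)
        (Poly_Mapping.lookup p m * of_nat (Poly_Mapping.lookup m x)))"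

definition simple_digraph :: "'v set \<Rightarrow> ('v \<times> 'v) set \<Rightarrow> bool" where
  "simple_digraph V D \<longleftrightarrow> D \<subseteq> V \<times> V \<and> (\<forall>i j. (i,j) \<in> D \<longrightarrow> i \<noteq> j)
     \<and> (\<forall>i j. (i,j) \<in> D \<longrightarrow> (j,i) \<notin> D)"

definition children :: "('v \<times> 'v) set \<Rightarrow> 'v \<Rightarrow> 'v set" where
  "children D v = {w. (v,w) \<in> D}"

definition Lam :: "('v \<times> 'v) set \<Rightarrow> 'v \<Rightarrow> 'v \<Rightarrow> 'v mpoly" where
  "Lam D i j = (if (i,j) \<in> D then mvar (Some (i,j)) else 0)"

definition Id_entry :: "'v \<Rightarrow> 'v \<Rightarrow> 'v mpoly" where
  "Id_entry i j = (if i = j then 1 else 0)"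

definition Kentry :: "'v set \<Rightarrow> ('v \<times> 'v) set \<Rightarrow> 'v \<Rightarrow> 'v \<Rightarrow> 'v mpoly" where
  "Kentry V D i j = mvar None *
     (\<Sum>k\<in>V. (Id_entry i k - Lam D i k) * (Id_entry j k - Lam D j k))"

text \<open>Row indices (parameters theta) and column indices (K_ij, i \<le> j) of J(psi_G).\<close>
definition jac_rows :: "('v \<times> 'v) set \<Rightarrow> 'v indet set" where
  "jac_rows D = Some ` D \<union> {None}"

definition jac_cols :: "'v::linorder set \<Rightarrow> ('v \<times> 'v) set" where
  "jac_cols V = {(i,j). i \<in> V \<and> j \<in> V \<and> i \<le> j}"

text \<open>Transposed Jacobian entry, viewed in the field of rational functions R(lambda,s).\<close>
definition jac :: "'v::linorder set \<Rightarrow> ('v \<times> 'v) set \<Rightarrow> 'v indet \<Rightarrow> 'v \<times> 'v \<Rightarrow> 'v mpoly fract" where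
  "jac V D \<theta> c = Fract (mpderiv \<theta> (Kentry V D (fst c) (snd c))) 1"

definition jac_indep :: "'v::linorder set \<Rightarrow> ('v \<times> 'v) set \<Rightarrow> ('v \<times> 'v) set \<Rightarrow> bool" where
  "jac_indep V D C \<longleftrightarrow> C \<subseteq> jac_cols V \<and>
     (\<forall>a :: 'v \<times> 'v \<Rightarrow> 'v mpoly fract.
        (\<forall>\<theta>\<in>jac_rows D. (\<Sum>c\<in>C. a c * jac V D \<theta> c) = 0) \<longrightarrow> (\<forall>c\<in>C. a c = 0))"

end

theory Submission
  imports Defs
begin

text \<open>
  Let G_1 be acyclic. Choose a node v whose children differ in the two graphs such that no node
  reachable from v in G_1 has this property, then a node w reachable from v that lies in exactly
  one of ch_1(v), ch_2(v) such that no node reachable from w does, and let A be the set of nodes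
  reachable from w. The two graphs agree on A, A is closed under taking children, and ch_1(v) \<inter> A
  and ch_2(v) \<inter> A differ only in w. So v has more children in A in one graph, G, than in the other, H.

  Take as columns K_tt for a sink t of A, K_ab for the edges a \<rightarrow> b inside A and K_vw for the
  edges v \<rightarrow> w of G into A. Ranked by the height of the head in A, with the edges from v first and
  K_tt last, they form a triangular system in the Jacobian of G with pivots \<lambda>_ab, \<lambda>_vw and s,
  hence are independent. In the Jacobian of H only the rows s, \<lambda>_ab for the edges inside A and
  \<lambda>_vw for the edges of H from v into A are nonzero on these columns: fewer rows than columns,
  so the columns are dependent.
\<close>

section \<open>Formal partial derivatives\<close>

lemma mpderiv_sum_superset:
  assumes "finite S" "Poly_Mapping.keys p \<subseteq> S"
  shows "mpderiv x p = (\<Sum>m\<in>S. Poly_Mapping.single (m - Poly_Mapping.single x 1)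
        (Poly_Mapping.lookup p m * of_nat (Poly_Mapping.lookup m x)))"
  unfolding mpderiv_def
  by (rule sum.mono_neutral_left) (auto simp: assms in_keys_iff)

lemma mpderiv_add: "mpderiv x (p + q) = mpderiv x p + mpderiv x q"
proof -
  let ?S = "Poly_Mapping.keys p \<union> Poly_Mapping.keys q"
  let ?d = "\<lambda>r m. Poly_Mapping.single (m - Poly_Mapping.single x 1)
        (Poly_Mapping.lookup r m * of_nat (Poly_Mapping.lookup m x))"
  have fin: "finite ?S" by simp
  have "mpderiv x (p + q) = (\<Sum>m\<in>?S. ?d (p + q) m)"
    by (rule mpderiv_sum_superset[OF fin keys_add])
  also have "\<dots> = (\<Sum>m\<in>?S. ?d p m) + (\<Sum>m\<in>?S. ?d q m)"
    by (simp add: lookup_add distrib_right single_add sum.distrib)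
  also have "\<dots> = mpderiv x p + mpderiv x q"
    by (simp add: mpderiv_sum_superset[OF fin])
  finally show ?thesis .
qed

lemma mpderiv_uminus: "mpderiv x (- p) = - mpderiv x p"
  unfolding mpderiv_def keys_minus lookup_uminus mult_minus_left single_uminus sum_negf ..

lemma mpderiv_diff: "mpderiv x (p - q) = mpderiv x p - mpderiv x q"
  by (simp only: diff_conv_add_uminus mpderiv_add mpderiv_uminus)

lemma mpderiv_zero [simp]: "mpderiv x 0 = 0"
  unfolding mpderiv_def by simp

lemma mpderiv_sum: "finite I \<Longrightarrow> mpderiv x (\<Sum>i\<in>I. f i) = (\<Sum>i\<in>I. mpderiv x (f i))"
  by (induction I rule: finite_induct) (simp_all add: mpderiv_add)

lemma mpderiv_single:
  "mpderiv x (Poly_Mapping.single m a) =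
     Poly_Mapping.single (m - Poly_Mapping.single x 1) (a * of_nat (Poly_Mapping.lookup m x))"
  by (subst mpderiv_sum_superset[where S="{m}"]) auto

lemma mpoly_eq_sum_monomials:
  "(p::'v mpoly) = (\<Sum>m\<in>Poly_Mapping.keys p. Poly_Mapping.single m (Poly_Mapping.lookup p m))"
  by (rule poly_mapping_eqI) (simp add: lookup_sum lookup_single when_def in_keys_iff)

lemma single_diff_add_commute:
  fixes m n :: "'v indet \<Rightarrow>\<^sub>0 nat"
  shows "Poly_Mapping.single (m - Poly_Mapping.single x 1 + n) (c * of_nat (Poly_Mapping.lookup m x) :: real)
       = Poly_Mapping.single (m + n - Poly_Mapping.single x 1) (c * of_nat (Poly_Mapping.lookup m x))"
proof (cases "Poly_Mapping.lookup m x = 0")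
  case False
  have "m - Poly_Mapping.single x 1 + n = m + n - Poly_Mapping.single x 1"
    by (rule poly_mapping_eqI) (use False in \<open>auto simp: lookup_add lookup_minus lookup_single when_def\<close>)
  then show ?thesis by simp
qed simp

lemma mpderiv_mult_single:
  "mpderiv x (Poly_Mapping.single m a * Poly_Mapping.single n b :: 'v mpoly) =
   mpderiv x (Poly_Mapping.single m a) * Poly_Mapping.single n b +
   Poly_Mapping.single m a * mpderiv x (Poly_Mapping.single n b)"
  using single_diff_add_commute[of m x n "a * b"] single_diff_add_commute[of n x m "a * b"]
  by (simp add: mpderiv_single mult_single lookup_add distrib_left single_add algebra_simps)

lemma mpderiv_mult: "mpderiv x (p * q :: 'v mpoly) = mpderiv x p * q + p * mpderiv x q"
proof -
  let ?P = "Poly_Mapping.keys p" and ?Q = "Poly_Mapping.keys q"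
  let ?sp = "\<lambda>m. Poly_Mapping.single m (Poly_Mapping.lookup p m)"
  let ?sq = "\<lambda>m. Poly_Mapping.single m (Poly_Mapping.lookup q m)"
  have ep: "p = (\<Sum>m\<in>?P. ?sp m)" and eq: "q = (\<Sum>m\<in>?Q. ?sq m)"
    by (rule mpoly_eq_sum_monomials)+
  have "p * q = (\<Sum>m\<in>?P. \<Sum>n\<in>?Q. ?sp m * ?sq n)"
    by (subst ep, subst eq) (simp add: sum_product)
  then have "mpderiv x (p * q) =
      (\<Sum>m\<in>?P. \<Sum>n\<in>?Q. mpderiv x (?sp m) * ?sq n + ?sp m * mpderiv x (?sq n))"
    by (simp add: mpderiv_sum mpderiv_mult_single)
  also have "\<dots> = (\<Sum>m\<in>?P. mpderiv x (?sp m)) * (\<Sum>n\<in>?Q. ?sq n)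
      + (\<Sum>m\<in>?P. ?sp m) * (\<Sum>n\<in>?Q. mpderiv x (?sq n))"
    by (simp add: sum.distrib sum_product)
  also have "\<dots> = mpderiv x p * q + p * mpderiv x q"
    by (subst (5) ep, subst (2) eq, subst (2) ep, subst (3) eq) (simp add: mpderiv_sum)
  finally show ?thesis .
qed

lemma mvar_nonzero: "mvar x \<noteq> (0 :: 'v mpoly)"
proof
  assume "mvar x = (0 :: 'v mpoly)"
  then have "Poly_Mapping.lookup (mvar x :: 'v mpoly) (Poly_Mapping.single x 1) = 0" by simp
  then show False by (simp add: mvar_def)
qed

lemma mpderiv_mvar: "mpderiv x (mvar y :: 'v mpoly) = (if x = y then 1 else 0)"
  by (auto simp: mvar_def mpderiv_single lookup_single when_def)

lemma mpderiv_one: "mpderiv x (1 :: 'v mpoly) = 0"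
  using mpderiv_single[of x 0 1] by simp

section \<open>Entries of the Jacobian\<close>

lemma mpderiv_Id_entry: "mpderiv x (Id_entry i j) = 0"
  by (simp add: Id_entry_def mpderiv_one)

lemma mpderiv_Lam: "mpderiv x (Lam D i j) = (if (i,j) \<in> D \<and> x = Some (i,j) then 1 else 0)"
  by (auto simp: Lam_def mpderiv_mvar)

lemma mpderiv_Kentry_None:
  assumes "finite V"
  shows "mpderiv None (Kentry V D i j) =
    (\<Sum>k\<in>V. (Id_entry i k - Lam D i k) * (Id_entry j k - Lam D j k))"
  unfolding Kentry_def
  by (simp add: mpderiv_mult mpderiv_mvar mpderiv_sum[OF assms] mpderiv_diff mpderiv_Id_entry mpderiv_Lam)

lemma mpderiv_Kentry_Some:
  assumes "finite V" "(x,y) \<in> D" "y \<in> V"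
  shows "mpderiv (Some (x,y)) (Kentry V D i j) =
    - (mvar None * ((if i = x then Id_entry j y - Lam D j y else 0)
                   + (if j = x then Id_entry i y - Lam D i y else 0)))"
proof -
  have factor: "mpderiv (Some (x,y)) (Id_entry i k - Lam D i k) = (if i = x \<and> k = y then -1 else 0)"
    for i k
    using assms(2) by (auto simp: mpderiv_diff mpderiv_Id_entry mpderiv_Lam)
  have "mpderiv (Some (x,y)) (\<Sum>k\<in>V. (Id_entry i k - Lam D i k) * (Id_entry j k - Lam D j k))
      = (\<Sum>k\<in>V. - (if k = y then (if i = x then Id_entry j k - Lam D j k else 0)
                               + (if j = x then Id_entry i k - Lam D i k else 0) else 0))"
      (is "?d = _")
    unfolding mpderiv_sum[OF assms(1)] mpderiv_mult factor by (intro sum.cong) auto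
  also have "\<dots> = - ((if i = x then Id_entry j y - Lam D j y else 0)
                     + (if j = x then Id_entry i y - Lam D i y else 0))" (is "_ = - ?r")
    using assms(1,3) by (simp only: sum_negf sum.delta if_True)
  finally have sum: "?d = - ?r" .
  show ?thesis
    unfolding Kentry_def mpderiv_mult mpderiv_mvar sum
    by (simp only: option.distinct if_False mult_zero_left add_0_left mult_minus_right)
qed

lemma Fract_eq_zero_iff: "Fract (p::'a::idom) 1 = 0 \<longleftrightarrow> p = 0"
  by (simp add: Zero_fract_def eq_fract)

lemma jac_swap: "jac V D \<theta> (j,i) = jac V D \<theta> (i,j)"
  by (simp add: jac_def Kentry_def mult.commute)

text \<open>
  Since dK_ij/d\<lambda>_xy = - s ([i = x] (I - \<Lambda>)_jy + [j = x] (I - \<Lambda>)_iy), the row of \<lambda>_xy vanishes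
  outside this set of columns.
\<close>
definition lam_row_support :: "('v \<times> 'v) set \<Rightarrow> 'v \<Rightarrow> 'v \<Rightarrow> ('v \<times> 'v) set" where
  "lam_row_support D x y =
     {(i,j). i = x \<and> (j = y \<or> (j,y) \<in> D) \<or> j = x \<and> (i = y \<or> (i,y) \<in> D)}"

lemma jac_Some_nonzero_in_support:
  assumes "finite V" "simple_digraph V D" "(x,y) \<in> D" "jac V D (Some (x,y)) c \<noteq> 0"
  shows "c \<in> lam_row_support D x y"
proof (rule ccontr)
  assume "c \<notin> lam_row_support D x y"
  moreover have "y \<in> V" using assms(2,3) by (auto simp: simple_digraph_def)
  ultimately have "mpderiv (Some (x,y)) (Kentry V D (fst c) (snd c)) = 0"
    by (cases c) (auto simp: mpderiv_Kentry_Some[OF assms(1,3)] Id_entry_def Lam_def lam_row_support_def)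
  then show False using assms(4) by (simp add: jac_def Fract_eq_zero_iff)
qed

lemma jac_Some_diagonal:
  assumes "finite V" "simple_digraph V D" "(x,y) \<in> D"
  shows "jac V D (Some (x,y)) (x,y) \<noteq> 0"
proof -
  have "y \<in> V" "x \<noteq> y" "(y,y) \<notin> D"
    using assms(2,3) by (auto simp: simple_digraph_def)
  then have "mpderiv (Some (x,y)) (Kentry V D x y) = - mvar None"
    by (simp add: mpderiv_Kentry_Some[OF assms(1,3)] Id_entry_def Lam_def)
  then show ?thesis by (simp add: jac_def Fract_eq_zero_iff mvar_nonzero)
qed

lemma jac_None_sink:
  assumes "finite V" "t \<in> V" "children D t = {}"
  shows "jac V D None (t,t) \<noteq> 0"
proof -
  have "mpderiv None (Kentry V D t t) = (\<Sum>k\<in>V. if t = k then 1 else 0)"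
    using assms(3) by (auto simp: mpderiv_Kentry_None[OF assms(1)] Id_entry_def Lam_def
        children_def intro!: sum.cong)
  also have "\<dots> = 1" using assms(1,2) by simp
  finally show ?thesis by (simp add: jac_def Fract_eq_zero_iff)
qed

section \<open>Columns indexed by unordered pairs\<close>

definition sort_pair :: "'v::linorder \<times> 'v \<Rightarrow> 'v \<times> 'v" where
  "sort_pair q = (min (fst q) (snd q), max (fst q) (snd q))"

lemma sort_pair_cases: "sort_pair (i,j) = (i,j) \<or> sort_pair (i,j) = (j,i)"
  by (auto simp: sort_pair_def min_def max_def)

lemma jac_sort_pair: "jac V D \<theta> (sort_pair q) = jac V D \<theta> q"
  using sort_pair_cases[of "fst q" "snd q"] by (cases q) (auto simp: jac_swap)

lemma sort_pair_in_jac_cols: "i \<in> V \<Longrightarrow> j \<in> V \<Longrightarrow> sort_pair (i,j) \<in> jac_cols V"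
  by (cases "i \<le> j") (auto simp: sort_pair_def jac_cols_def min_def max_def)

lemma inj_on_sort_pair:
  assumes "\<And>i j. (i,j) \<in> Q \<Longrightarrow> (j,i) \<in> Q \<Longrightarrow> i = j"
  shows "inj_on sort_pair Q"
proof (rule inj_onI)
  fix q q' assume "q \<in> Q" "q' \<in> Q" "sort_pair q = sort_pair q'"
  then show "q = q'"
    using assms sort_pair_cases[of "fst q" "snd q"] sort_pair_cases[of "fst q'" "snd q'"]
    by (cases q; cases q') auto
qed

lemma jac_indep_sort_pair_image_iff:
  assumes inj: "inj_on sort_pair Q" and cols: "sort_pair ` Q \<subseteq> jac_cols V"
  shows "jac_indep V D (sort_pair ` Q) \<longleftrightarrow>
    (\<forall>a. (\<forall>\<theta>\<in>jac_rows D. (\<Sum>q\<in>Q. a q * jac V D \<theta> q) = 0) \<longrightarrow> (\<forall>q\<in>Q. a q = 0))"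
proof -
  have reindex: "(\<Sum>c\<in>sort_pair ` Q. b c * jac V D \<theta> c) = (\<Sum>q\<in>Q. b (sort_pair q) * jac V D \<theta> q)"
    for b \<theta> by (simp add: sum.reindex[OF inj] jac_sort_pair)
  show ?thesis
  proof (intro iffI allI impI ballI)
    fix a q
    assume indep: "jac_indep V D (sort_pair ` Q)"
      and rows: "\<forall>\<theta>\<in>jac_rows D. (\<Sum>q\<in>Q. a q * jac V D \<theta> q) = 0" and "q \<in> Q"
    define b where "b c = a (inv_into Q sort_pair c)" for c
    have b: "b (sort_pair q) = a q" if "q \<in> Q" for q
      using inj that by (simp add: b_def)
    then have "(\<Sum>q\<in>Q. b (sort_pair q) * jac V D \<theta> q) = (\<Sum>q\<in>Q. a q * jac V D \<theta> q)" for \<theta>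
      by (intro sum.cong) auto
    then have "\<forall>c\<in>sort_pair ` Q. b c = 0"
      using indep rows by (auto simp: jac_indep_def reindex)
    then have "b (sort_pair q) = 0" using \<open>q \<in> Q\<close> by blast
    with b \<open>q \<in> Q\<close> show "a q = 0" by simp
  next
    assume trivial: "\<forall>a. (\<forall>\<theta>\<in>jac_rows D. (\<Sum>q\<in>Q. a q * jac V D \<theta> q) = 0) \<longrightarrow> (\<forall>q\<in>Q. a q = 0)"
    have "\<forall>c\<in>sort_pair ` Q. b c = 0"
      if "\<forall>\<theta>\<in>jac_rows D. (\<Sum>q\<in>Q. b (sort_pair q) * jac V D \<theta> q) = 0" for b
      using trivial[rule_format, of "\<lambda>q. b (sort_pair q)"] that by blast
    then show "jac_indep V D (sort_pair ` Q)"
      unfolding jac_indep_def reindex using cols by blast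
  qed
qed

section \<open>Homogeneous linear systems\<close>

lemma homogeneous_system_nontrivial_solution:
  fixes M :: "'r \<Rightarrow> 'c \<Rightarrow> 'f::field"
  assumes "finite R" "finite C" "card R < card C"
  shows "\<exists>a. (\<forall>\<theta>\<in>R. (\<Sum>c\<in>C. a c * M \<theta> c) = 0) \<and> (\<exists>c\<in>C. a c \<noteq> 0)"
  using assms
proof (induction R arbitrary: C M rule: finite_induct)
  case empty
  then obtain c0 where "c0 \<in> C" by fastforce
  then show ?case by (intro exI[of _ "\<lambda>c. if c = c0 then 1 else 0"]) auto
next
  case (insert \<theta> R)
  show ?case
  proof (cases "\<forall>c\<in>C. M \<theta> c = 0")
    case True
    then show ?thesis using insert.IH[of C M] insert.prems insert.hyps by auto
  next
    case False
    then obtain c0 where c0: "c0 \<in> C" "M \<theta> c0 \<noteq> 0" by blast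
    \<comment> \<open>eliminate column c0 using row \<theta>\<close>
    define C' where "C' = C - {c0}"
    define M' where "M' \<rho> c = M \<rho> c - M \<theta> c / M \<theta> c0 * M \<rho> c0" for \<rho> c
    have "finite C'" "card R < card C'"
      using insert c0 by (simp_all add: C'_def)
    then obtain b where b: "\<forall>\<rho>\<in>R. (\<Sum>c\<in>C'. b c * M' \<rho> c) = 0" "\<exists>c\<in>C'. b c \<noteq> 0"
      using insert.IH by blast
    define a where "a c = (if c = c0 then - (\<Sum>c\<in>C'. b c * M \<theta> c) / M \<theta> c0 else b c)" for c
    have reduce: "(\<Sum>c\<in>C. a c * M \<rho> c) = (\<Sum>c\<in>C'. b c * M' \<rho> c)" for \<rho>
    proof -
      have "(\<Sum>c\<in>C. a c * M \<rho> c) = a c0 * M \<rho> c0 + (\<Sum>c\<in>C'. b c * M \<rho> c)"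
        using c0 insert.prems(1) by (simp add: C'_def a_def sum.remove)
      also have "\<dots> = (\<Sum>c\<in>C'. b c * M' \<rho> c)"
        by (simp add: M'_def a_def algebra_simps sum_subtractf sum_distrib_left sum_distrib_right
            sum_divide_distrib)
      finally show ?thesis .
    qed
    have "(\<Sum>c\<in>C. a c * M \<rho> c) = 0" if "\<rho> \<in> insert \<theta> R" for \<rho>
      using that b(1) c0(2) by (auto simp: reduce M'_def)
    moreover have "\<exists>c\<in>C. a c \<noteq> 0" using b(2) by (auto simp: a_def C'_def)
    ultimately show ?thesis by blast
  qed
qed

lemma triangular_system_trivial_solution:
  fixes M :: "'r \<Rightarrow> 'c \<Rightarrow> 'f::field" and rank :: "'c \<Rightarrow> nat"
  assumes "finite C"
    and pivot: "\<And>c. c \<in> C \<Longrightarrow> p c \<in> R \<and> M (p c) c \<noteq> 0"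
    and triangular: "\<And>c c'. c \<in> C \<Longrightarrow> c' \<in> C \<Longrightarrow> c' \<noteq> c \<Longrightarrow> M (p c) c' \<noteq> 0 \<Longrightarrow> rank c' < rank c"
    and solution: "\<forall>\<theta>\<in>R. (\<Sum>c\<in>C. a c * M \<theta> c) = 0"
  shows "\<forall>c\<in>C. a c = 0"
proof -
  have "a c = 0" if "c \<in> C" "rank c = n" for c n
    using that
  proof (induction n arbitrary: c rule: less_induct)
    case (less n)
    have "(\<Sum>c'\<in>C - {c}. a c' * M (p c) c') = 0"
    proof (rule sum.neutral, intro ballI)
      fix c' assume c': "c' \<in> C - {c}"
      show "a c' * M (p c) c' = 0"
        using less c' triangular[of c c'] by (cases "M (p c) c' = 0") auto
    qed
    moreover have "(\<Sum>c'\<in>C. a c' * M (p c) c') = 0"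
      using solution pivot less.prems(1) by blast
    ultimately have "a c * M (p c) c = 0"
      using less.prems(1) \<open>finite C\<close> by (simp add: sum.remove)
    then show "a c = 0" using pivot less.prems(1) by simp
  qed
  then show ?thesis by blast
qed

section \<open>Finite acyclic relations\<close>

lemma finite_acyclic_obtains_last:
  assumes "finite R" "acyclic R" "x \<in> S"
  obtains z where "z \<in> S" "\<And>y. y \<in> S \<Longrightarrow> (z,y) \<notin> R\<^sup>+"
proof -
  have "wf ((R\<^sup>+)\<inverse>)"
    using wf_trancl[OF finite_acyclic_wf_converse[OF assms(1,2)]] by (simp add: trancl_converse)
  then have "\<exists>z\<in>S. \<forall>y. (y,z) \<in> (R\<^sup>+)\<inverse> \<longrightarrow> y \<notin> S"
    using assms(3) unfolding wf_eq_minimal by blast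
  then show ?thesis using that by blast
qed

definition height :: "('a \<times> 'a) set \<Rightarrow> 'a \<Rightarrow> nat" where
  "height E b = card {a. (a,b) \<in> E\<^sup>+}"

lemma height_less:
  assumes "finite E" "acyclic E" "(a,b) \<in> E"
  shows "height E a < height E b"
proof -
  have "{a'. (a',a) \<in> E\<^sup>+} \<subseteq> {a'. (a',b) \<in> E\<^sup>+}"
    using assms(3) by (blast intro: trancl_into_trancl)
  moreover have "a \<in> {a'. (a',b) \<in> E\<^sup>+} - {a'. (a',a) \<in> E\<^sup>+}"
    using assms(2,3) by (auto simp: acyclic_def)
  ultimately have "{a'. (a',a) \<in> E\<^sup>+} \<subset> {a'. (a',b) \<in> E\<^sup>+}"
    by blast
  moreover have "finite {a'. (a',b) \<in> E\<^sup>+}"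
  proof (rule finite_subset)
    show "{a'. (a',b) \<in> E\<^sup>+} \<subseteq> Domain (E\<^sup>+)" by blast
    show "finite (Domain (E\<^sup>+))" using assms(1) by (simp add: finite_Domain)
  qed
  ultimately show ?thesis unfolding height_def by (rule psubset_card_mono[rotated])
qed

lemma height_less_card:
  assumes "finite A" "acyclic E" "E \<subseteq> A \<times> A" "b \<in> A"
  shows "height E b < card A"
proof -
  have "{a. (a,b) \<in> E\<^sup>+} \<subseteq> A - {b}"
    using assms(2) trancl_subset_Sigma[OF assms(3)] by (auto simp: acyclic_def)
  then have "height E b \<le> card (A - {b})"
    unfolding height_def using assms(1) by (simp add: card_mono)
  also have "\<dots> < card A" using assms(1,4) by (rule card_Diff1_less)
  finally show ?thesis .
qed

section \<open>Witness columns\<close>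

locale jac_witness =
  fixes V :: "'v::linorder set" and G :: "('v \<times> 'v) set" and A :: "'v set" and v t :: 'v
  assumes finite_V: "finite V" and simple_G: "simple_digraph V G"
    and A_subset: "A \<subseteq> V" and v_notin_A: "v \<notin> A"
    and A_closed: "\<And>a. a \<in> A \<Longrightarrow> children G a \<subseteq> A"
    and acyclic_A: "acyclic (G \<inter> A \<times> A)"
    and t_in_A: "t \<in> A" and t_sink: "children G t = {}"
begin

definition witness :: "('v \<times> 'v) set" where
  "witness = insert (t,t) (G \<inter> A \<times> A \<union> Pair v ` (children G v \<inter> A))"

lemma finite_A: "finite A"
  using A_subset finite_V by (rule finite_subset)

lemma finite_inner: "finite (G \<inter> A \<times> A)"
  by (rule finite_subset[of _ "A \<times> A"]) (simp_all add: finite_A)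

lemma edge_simple:
  assumes "(a,b) \<in> G"
  shows "a \<noteq> b" "(b,a) \<notin> G" "a \<in> V" "b \<in> V"
  using simple_G assms by (auto simp: simple_digraph_def)

lemma witness_cases [consumes 1, case_names diagonal inner from_v]:
  assumes "q \<in> witness"
  obtains "q = (t,t)"
    | a b where "q = (a,b)" "(a,b) \<in> G" "a \<in> A" "b \<in> A"
    | w where "q = (v,w)" "(v,w) \<in> G" "w \<in> A"
  using assms by (auto simp: witness_def children_def)

lemma finite_witness: "finite witness"
  using finite_inner finite_A by (simp add: witness_def)

lemma card_witness: "card witness = Suc (card (G \<inter> A \<times> A) + card (children G v \<inter> A))"
proof -
  have "(t,t) \<notin> G \<inter> A \<times> A \<union> Pair v ` (children G v \<inter> A)"
    using t_sink t_in_A v_notin_A by (auto simp: children_def)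
  moreover have "G \<inter> A \<times> A \<inter> Pair v ` (children G v \<inter> A) = {}"
    using v_notin_A by auto
  moreover have "card (Pair v ` (children G v \<inter> A)) = card (children G v \<inter> A)"
    by (rule card_image) (simp add: inj_on_def)
  ultimately show ?thesis
    using finite_inner finite_A by (simp add: witness_def card_Un_disjoint)
qed

lemma inj_on_sort_pair_witness: "inj_on sort_pair witness"
proof (rule inj_on_sort_pair)
  fix i j assume "(i,j) \<in> witness" "(j,i) \<in> witness"
  then show "i = j"
    using edge_simple(2) v_notin_A t_in_A by (auto simp: witness_def children_def)
qed

lemma sort_pair_witness_subset: "sort_pair ` witness \<subseteq> jac_cols V"
proof
  fix c assume "c \<in> sort_pair ` witness"
  then obtain i j where "c = sort_pair (i,j)" "(i,j) \<in> witness" by auto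
  moreover have "i \<in> V \<and> j \<in> V" using \<open>(i,j) \<in> witness\<close>
    by (cases rule: witness_cases) (use edge_simple t_in_A A_subset in auto)
  ultimately show "c \<in> jac_cols V" by (simp add: sort_pair_in_jac_cols)
qed

abbreviation inner_height :: "'v \<Rightarrow> nat" where
  "inner_height \<equiv> height (G \<inter> A \<times> A)"

lemma inner_height_less: "(a,b) \<in> G \<Longrightarrow> a \<in> A \<Longrightarrow> b \<in> A \<Longrightarrow> inner_height a < inner_height b"
  by (rule height_less[OF finite_inner acyclic_A]) simp

lemma inner_height_less_card: "b \<in> A \<Longrightarrow> inner_height b < card A"
  by (rule height_less_card[OF finite_A acyclic_A]) auto

lemma witness_edge: "q \<in> witness \<Longrightarrow> q \<noteq> (t,t) \<Longrightarrow> q \<in> G"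
  by (auto simp: witness_def children_def)

definition pivot :: "'v \<times> 'v \<Rightarrow> 'v indet" where
  "pivot q = (if q = (t,t) then None else Some q)"

text \<open>
  The row of \<lambda>_ab may be nonzero in the column K_va when v \<rightarrow> a, v \<rightarrow> b and a \<rightarrow> b, so the edges from
  v must rank below the edges inside A.
\<close>
definition rank :: "'v \<times> 'v \<Rightarrow> nat" where
  "rank q = (if q = (t,t) then 2 * card A
             else if fst q = v then inner_height (snd q) else card A + inner_height (snd q))"

lemma pivot_nonzero:
  assumes "q \<in> witness"
  shows "pivot q \<in> jac_rows G \<and> jac V G (pivot q) q \<noteq> 0"
proof (cases "q = (t,t)")
  case True
  then show ?thesis
    using jac_None_sink[OF finite_V _ t_sink] t_in_A A_subset by (auto simp: pivot_def jac_rows_def)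
next
  case False
  then have "q \<in> G" using witness_edge assms by blast
  then show ?thesis
    using jac_Some_diagonal[OF finite_V simple_G] False by (cases q) (auto simp: pivot_def jac_rows_def)
qed

lemma rank_less_diagonal:
  assumes "q \<in> witness" "q \<noteq> (t,t)"
  shows "rank q < 2 * card A"
  using assms
proof (cases rule: witness_cases)
  case (inner a b)
  then show ?thesis
    using inner_height_less_card[of b] v_notin_A edge_simple(1)[of a b] by (auto simp: rank_def)
next
  case (from_v w)
  then show ?thesis using inner_height_less_card[of w] t_in_A v_notin_A by (auto simp: rank_def)
qed simp

lemma rank_less_inner:
  assumes "(a,b) \<in> G" "a \<in> A" "b \<in> A"
    and "q' \<in> witness" "q' \<noteq> (a,b)" "q' \<in> lam_row_support G a b"
  shows "rank q' < rank (a,b)"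
proof -
  have rank_ab: "rank (a,b) = card A + inner_height b"
    using assms(1,2) edge_simple(1) v_notin_A by (auto simp: rank_def)
  from assms(4) show ?thesis
  proof (cases rule: witness_cases)
    case diagonal
    then show ?thesis using assms(1,6) t_sink by (auto simp: lam_row_support_def children_def)
  next
    case (inner a' b')
    with assms(1,5,6) consider "a' = a" "(b',b) \<in> G" | "b' = a" "(a',b) \<in> G"
      using edge_simple(2) by (auto simp: lam_row_support_def)
    then have "inner_height b' < inner_height b"
      by cases (use inner_height_less inner assms(1-3) in auto)
    moreover have "rank q' = card A + inner_height b'"
      using inner v_notin_A t_in_A edge_simple(1) by (auto simp: rank_def)
    ultimately show ?thesis using rank_ab by simp
  next
    case (from_v w)
    then show ?thesis
      using inner_height_less_card[of w] rank_ab t_in_A v_notin_A by (auto simp: rank_def)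
  qed
qed

lemma rank_less_from_v:
  assumes "(v,w) \<in> G" "w \<in> A"
    and "q' \<in> witness" "q' \<noteq> (v,w)" "q' \<in> lam_row_support G v w"
  shows "rank q' < rank (v,w)"
  using assms(3)
proof (cases rule: witness_cases)
  case diagonal
  then show ?thesis using assms(5) t_in_A v_notin_A by (auto simp: lam_row_support_def)
next
  case (inner a' b')
  then show ?thesis using assms(5) v_notin_A by (auto simp: lam_row_support_def)
next
  case (from_v w')
  then have "(w',w) \<in> G"
    using assms(4,5) v_notin_A by (auto simp: lam_row_support_def)
  then show ?thesis
    using inner_height_less from_v assms(2) t_in_A v_notin_A by (auto simp: rank_def)
qed

lemma rank_triangular:
  assumes "q \<in> witness" "q' \<in> witness" "q' \<noteq> q" "jac V G (pivot q) q' \<noteq> 0"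
  shows "rank q' < rank q"
proof (cases "q = (t,t)")
  case True
  then show ?thesis using rank_less_diagonal[OF assms(2)] assms(3) by (simp add: rank_def)
next
  case False
  then have "q \<in> G" "pivot q = Some q" using witness_edge assms(1) by (simp_all add: pivot_def)
  then have support: "q' \<in> lam_row_support G (fst q) (snd q)"
    using jac_Some_nonzero_in_support[OF finite_V simple_G, of "fst q" "snd q"] assms(4) by simp
  from assms(1) show ?thesis
  proof (cases rule: witness_cases)
    case (inner a b)
    then show ?thesis using rank_less_inner assms(2,3) support by simp
  next
    case (from_v w)
    then show ?thesis using rank_less_from_v assms(2,3) support by simp
  qed (use False in simp)
qed

lemma jac_indep_witness: "jac_indep V G (sort_pair ` witness)"
  unfolding jac_indep_sort_pair_image_iff[OF inj_on_sort_pair_witness sort_pair_witness_subset]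
  using triangular_system_trivial_solution[of witness pivot "jac_rows G" "jac V G" rank]
    finite_witness pivot_nonzero rank_triangular by blast

lemma jac_row_nonzero_on_witness:
  assumes "simple_digraph V H" "\<forall>a\<in>A. children H a = children G a"
    and "(x,y) \<in> H" "q \<in> witness" "jac V H (Some (x,y)) q \<noteq> 0"
  shows "(x,y) \<in> G \<inter> A \<times> A \<or> x = v \<and> y \<in> children H v \<inter> A"
proof -
  have support: "q \<in> lam_row_support H x y"
    using jac_Some_nonzero_in_support[OF finite_V assms(1,3,5)] .
  have H_inner: "(a,b) \<in> G \<and> b \<in> A" if "(a,b) \<in> H" "a \<in> A" for a b
    using that assms(2) A_closed by (auto simp: children_def)
  from assms(4) have "x \<in> A \<or> x = v \<and> y \<in> A"
  proof (cases rule: witness_cases)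
    case diagonal
    then show ?thesis using support t_in_A by (auto simp: lam_row_support_def)
  next
    case (inner a b)
    then show ?thesis using support by (auto simp: lam_row_support_def)
  next
    case (from_v w)
    then show ?thesis using support H_inner by (auto simp: lam_row_support_def)
  qed
  then show ?thesis using H_inner assms(3) by (auto simp: children_def)
qed

lemma jac_dependent_witness:
  assumes "simple_digraph V H" "\<forall>a\<in>A. children H a = children G a"
    and "card (children H v \<inter> A) < card (children G v \<inter> A)"
  shows "\<not> jac_indep V H (sort_pair ` witness)"
proof -
  define R where "R = insert None (Some ` (G \<inter> A \<times> A \<union> Pair v ` (children H v \<inter> A)))"
  have "finite R" using finite_inner finite_A by (simp add: R_def)
  have "card R = Suc (card (G \<inter> A \<times> A \<union> Pair v ` (children H v \<inter> A)))"
    using finite_inner finite_A by (simp add: R_def card_image)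
  also have "\<dots> \<le> Suc (card (G \<inter> A \<times> A) + card (children H v \<inter> A))"
    using card_Un_le[of "G \<inter> A \<times> A" "Pair v ` (children H v \<inter> A)"]
      card_image_le[of "children H v \<inter> A" "Pair v"] finite_A by simp
  also have "\<dots> < card witness" using assms(3) card_witness by simp
  finally obtain a where solution_R: "\<forall>\<theta>\<in>R. (\<Sum>q\<in>witness. a q * jac V H \<theta> q) = 0"
      and nontrivial: "\<exists>q\<in>witness. a q \<noteq> 0"
    using homogeneous_system_nontrivial_solution[OF \<open>finite R\<close> finite_witness] by blast
  have "(\<Sum>q\<in>witness. a q * jac V H \<theta> q) = 0" if row: "\<theta> \<in> jac_rows H" for \<theta>
  proof (cases "\<theta> \<in> R")
    case False
    then obtain x y where xy: "\<theta> = Some (x,y)" "(x,y) \<in> H"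
      using row by (auto simp: R_def jac_rows_def)
    have "jac V H \<theta> q = 0" if "q \<in> witness" for q
      using jac_row_nonzero_on_witness[OF assms(1,2) xy(2) that] False xy(1) by (auto simp: R_def)
    then show ?thesis by simp
  qed (use solution_R in blast)
  then show ?thesis
    using nontrivial
    by (auto simp: jac_indep_sort_pair_image_iff[OF inj_on_sort_pair_witness sort_pair_witness_subset])
qed

end

lemma jac_matroids_differ_of_separating_set:
  fixes V :: "'v::linorder set"
  assumes fin: "finite V" and simple: "simple_digraph V G" "simple_digraph V H"
    and "A \<subseteq> V" "v \<notin> A"
    and same: "\<forall>a\<in>A. children H a = children G a"
    and closed: "\<forall>a\<in>A. children G a \<subseteq> A"
    and acyclic: "acyclic (G \<inter> A \<times> A)"
    and fewer: "card (children H v \<inter> A) < card (children G v \<inter> A)"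
  shows "\<exists>C \<subseteq> jac_cols V. jac_indep V G C \<and> \<not> jac_indep V H C"
proof -
  obtain w where "w \<in> A" using fewer by fastforce
  have "finite (G \<inter> A \<times> A)"
    by (rule finite_subset[of _ "V \<times> V"]) (use \<open>A \<subseteq> V\<close> fin in auto)
  then obtain t where "t \<in> A" and last: "\<And>y. y \<in> A \<Longrightarrow> (t,y) \<notin> (G \<inter> A \<times> A)\<^sup>+"
    using finite_acyclic_obtains_last[OF _ acyclic \<open>w \<in> A\<close>] by blast
  have "children G t = {}"
    using last closed \<open>t \<in> A\<close> by (auto simp: children_def)
  then interpret jac_witness V G A v t
    using assms \<open>t \<in> A\<close> by unfold_locales auto
  show ?thesis
    using jac_indep_witness jac_dependent_witness[OF simple(2) same fewer] sort_pair_witness_subset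
    by blast
qed

section \<open>Separating sets\<close>

lemma card_less_if_Diff_singleton_eq:
  assumes "finite B" "B - {w} = B' - {w}" "w \<in> B" "w \<notin> B'"
  shows "card B' < card B"
  using card_Diff1_less[OF assms(1,3)] assms(2,4) by simp

lemma lowest_differing_node:
  fixes D1 D2 :: "('v \<times> 'v) set"
  assumes fin: "finite V" and sub: "D1 \<subseteq> V \<times> V" "D2 \<subseteq> V \<times> V" and "D1 \<noteq> D2"
    and acyclic: "acyclic D1"
  obtains v where "v \<in> V" "children D1 v \<noteq> children D2 v"
    "\<And>u. (v,u) \<in> D1\<^sup>+ \<Longrightarrow> children D2 u = children D1 u"
proof -
  define X where "X = {u\<in>V. children D1 u \<noteq> children D2 u}"
  have "X \<noteq> {}"
  proof
    assume "X = {}"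
    then have "children D1 u = children D2 u" for u
      using sub by (cases "u \<in> V") (auto simp: X_def children_def)
    then show False using \<open>D1 \<noteq> D2\<close> by (auto simp: children_def)
  qed
  moreover have "finite D1" using sub(1) by (rule finite_subset) (simp add: fin)
  ultimately obtain v where "v \<in> X" and v_last: "\<And>u. u \<in> X \<Longrightarrow> (v,u) \<notin> D1\<^sup>+"
    using finite_acyclic_obtains_last[OF _ acyclic] by blast
  have "children D2 u = children D1 u" if "(v,u) \<in> D1\<^sup>+" for u
  proof -
    have "u \<in> V" using trancl_subset_Sigma[OF sub(1)] that by auto
    then show ?thesis using v_last[of u] that by (auto simp: X_def)
  qed
  moreover have "v \<in> V" "children D1 v \<noteq> children D2 v"
    using \<open>v \<in> X\<close> by (simp_all add: X_def)
  ultimately show ?thesis using that by blast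
qed

lemma lowest_differing_child:
  assumes "finite D1" "acyclic D1" "finite (children D2 v)"
    and "card (children D1 v) = card (children D2 v)" "children D1 v \<noteq> children D2 v"
  obtains w where "(v,w) \<in> D1\<^sup>+" "w \<in> children D1 v \<longleftrightarrow> w \<notin> children D2 v"
    "\<And>u. (v,u) \<in> D1\<^sup>+ \<Longrightarrow> (w,u) \<in> D1\<^sup>+ \<Longrightarrow> u \<in> children D1 v \<longleftrightarrow> u \<in> children D2 v"
proof -
  define Y where "Y = {u. (v,u) \<in> D1\<^sup>+ \<and> (u \<in> children D1 v \<longleftrightarrow> u \<notin> children D2 v)}"
  have "Y \<noteq> {}"
  proof
    assume "Y = {}"
    then have "children D1 v \<subseteq> children D2 v"
      by (auto simp: Y_def children_def)
    then show False
      using card_subset_eq assms(3-5) by blast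
  qed
  then obtain w where "w \<in> Y" and w_last: "\<And>u. u \<in> Y \<Longrightarrow> (w,u) \<notin> D1\<^sup>+"
    using finite_acyclic_obtains_last[OF assms(1,2)] by blast
  have "(v,w) \<in> D1\<^sup>+" "w \<in> children D1 v \<longleftrightarrow> w \<notin> children D2 v"
    using \<open>w \<in> Y\<close> by (simp_all add: Y_def)
  moreover have "u \<in> children D1 v \<longleftrightarrow> u \<in> children D2 v"
    if "(v,u) \<in> D1\<^sup>+" "(w,u) \<in> D1\<^sup>+" for u
    using w_last[of u] that by (auto simp: Y_def)
  ultimately show ?thesis by (rule that)
qed

lemma separating_set_exists:
  fixes D1 D2 :: "('v \<times> 'v) set"
  assumes fin: "finite V" and sub: "D1 \<subseteq> V \<times> V" "D2 \<subseteq> V \<times> V" and "D1 \<noteq> D2"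
    and same_degree: "\<forall>v\<in>V. card (children D1 v) = card (children D2 v)"
    and acyclic: "acyclic D1"
  obtains v A where "A \<subseteq> V" "v \<notin> A"
    "\<forall>a\<in>A. children D2 a = children D1 a" "\<forall>a\<in>A. children D1 a \<subseteq> A"
    "card (children D1 v \<inter> A) \<noteq> card (children D2 v \<inter> A)"
proof -
  obtain v where "v \<in> V" and differ: "children D1 v \<noteq> children D2 v"
    and below_v: "\<And>u. (v,u) \<in> D1\<^sup>+ \<Longrightarrow> children D2 u = children D1 u"
    using lowest_differing_node[OF fin sub \<open>D1 \<noteq> D2\<close> acyclic] by blast
  have "finite D1" using sub(1) by (rule finite_subset) (simp add: fin)
  moreover have "finite (children D2 v)"
    using fin sub(2) by (auto simp: children_def intro: finite_subset[of _ V])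
  ultimately obtain w where "(v,w) \<in> D1\<^sup>+" and w_differs: "w \<in> children D1 v \<longleftrightarrow> w \<notin> children D2 v"
    and below_w: "\<And>u. (v,u) \<in> D1\<^sup>+ \<Longrightarrow> (w,u) \<in> D1\<^sup>+ \<Longrightarrow> u \<in> children D1 v \<longleftrightarrow> u \<in> children D2 v"
    using lowest_differing_child[OF _ acyclic] same_degree \<open>v \<in> V\<close> differ by blast
  define A where "A = D1\<^sup>* `` {w}"
  have below_v_A: "(v,a) \<in> D1\<^sup>+" if "a \<in> A" for a
    using \<open>(v,w) \<in> D1\<^sup>+\<close> that by (auto simp: A_def intro: trancl_rtrancl_trancl)
  show ?thesis
  proof (rule that)
    show "A \<subseteq> V" using below_v_A trancl_subset_Sigma[OF sub(1)] by auto
    show "v \<notin> A" using below_v_A acyclic by (auto simp: acyclic_def)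
    show "\<forall>a\<in>A. children D2 a = children D1 a" using below_v_A below_v by blast
    show "\<forall>a\<in>A. children D1 a \<subseteq> A"
      by (auto simp: A_def children_def intro: rtrancl_into_rtrancl)
    have "(w,a) \<in> D1\<^sup>+" if "a \<in> A" "a \<noteq> w" for a
      using that by (auto simp: A_def dest: rtranclD)
    then have agree: "children D1 v \<inter> A - {w} = children D2 v \<inter> A - {w}"
      using below_v_A below_w by blast
    have "w \<in> A" by (simp add: A_def)
    moreover have "finite (children Di v \<inter> A)" for Di
      using \<open>A \<subseteq> V\<close> fin by (auto intro: finite_subset[of _ V])
    ultimately show "card (children D1 v \<inter> A) \<noteq> card (children D2 v \<inter> A)"
      using w_differs card_less_if_Diff_singleton_eq[OF _ agree]
        card_less_if_Diff_singleton_eq[OF _ agree[symmetric]]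
      by fastforce
  qed
qed

lemma jac_matroids_differ_if_acyclic:
  fixes V :: "'v::linorder set"
  assumes fin: "finite V" and simple: "simple_digraph V D1" "simple_digraph V D2"
    and "D1 \<noteq> D2" "\<forall>v\<in>V. card (children D1 v) = card (children D2 v)" "acyclic D1"
  shows "\<exists>C \<subseteq> jac_cols V. jac_indep V D1 C \<noteq> jac_indep V D2 C"
proof -
  have sub: "D1 \<subseteq> V \<times> V" "D2 \<subseteq> V \<times> V" using simple by (simp_all add: simple_digraph_def)
  obtain v A where sep: "A \<subseteq> V" "v \<notin> A"
    and same: "\<forall>a\<in>A. children D2 a = children D1 a" and closed: "\<forall>a\<in>A. children D1 a \<subseteq> A"
    and differ: "card (children D1 v \<inter> A) \<noteq> card (children D2 v \<inter> A)"
    by (rule separating_set_exists[OF fin sub assms(4-6)])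
  have acyclic1: "acyclic (D1 \<inter> A \<times> A)"
    by (rule acyclic_subset[OF \<open>acyclic D1\<close>]) blast
  from differ consider
      "card (children D2 v \<inter> A) < card (children D1 v \<inter> A)"
    | "card (children D1 v \<inter> A) < card (children D2 v \<inter> A)" by linarith
  then show ?thesis
  proof cases
    case 1
    then show ?thesis
      using jac_matroids_differ_of_separating_set[OF fin simple sep same closed acyclic1] by blast
  next
    case 2
    have same': "\<forall>a\<in>A. children D1 a = children D2 a" and closed': "\<forall>a\<in>A. children D2 a \<subseteq> A"
      using same closed by auto
    have "(a,b) \<in> D2 \<longleftrightarrow> (a,b) \<in> D1" if "a \<in> A" for a b
      using same[rule_format, OF that] unfolding children_def by blast
    then have "D2 \<inter> A \<times> A = D1 \<inter> A \<times> A" by auto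
    then have acyclic2: "acyclic (D2 \<inter> A \<times> A)" using acyclic1 by simp
    obtain C where "C \<subseteq> jac_cols V" "jac_indep V D2 C" "\<not> jac_indep V D1 C"
      using jac_matroids_differ_of_separating_set[OF fin simple(2,1) sep same' closed' acyclic2 2]
      by blast
    then show ?thesis by blast
  qed
qed

theorem corollary4p14:
  fixes V :: "'v::linorder set" and D1 D2 :: "('v \<times> 'v) set"
  assumes "finite V"
    and "simple_digraph V D1" and "simple_digraph V D2"
    and "D1 \<noteq> D2"
    and "\<forall>v\<in>V. card (children D1 v) = card (children D2 v)"
    and "acyclic D1 \<or> acyclic D2"
  shows "\<exists>C \<subseteq> jac_cols V. jac_indep V D1 C \<noteq> jac_indep V D2 C"
  using assms(6)
proof
  assume "acyclic D1"
  then show ?thesis by (rule jac_matroids_differ_if_acyclic[OF assms(1-5)])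
next
  assume "acyclic D2"
  moreover have "D2 \<noteq> D1" "\<forall>v\<in>V. card (children D2 v) = card (children D1 v)"
    using assms(4,5) by auto
  ultimately obtain C where "C \<subseteq> jac_cols V" "jac_indep V D2 C \<noteq> jac_indep V D1 C"
    using jac_matroids_differ_if_acyclic[OF assms(1,3,2)] by blast
  then show ?thesis by blast
qed

end
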